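(* Let $X$ be a connected CW complex with fundamental group $G$ and universal cover $\widetilde X$ (with the induced cell structure), and let $\alpha\in C^k(\widetilde X;\mathbb{R})$ be a cellular cocycle. Suppose there is $\Lambda\ge0$ such that $|\alpha(c)|\le\Lambda\,\|\partial c\|_1$ for every cellular chain $c\in C_k(\widetilde X;\mathbb{R})$. Then $\alpha$ is bounded on orbits and $[\alpha]=0\in H^k_{(\infty)}(X;\mathbb{R})$. Moreover, if the $(k-1)$-skeleton of $X$ is finite, the converse holds: if $\alpha$ is a cellular cocycle bounded on orbits with $[\alpha]=0$ in $H^k_{(\infty)}(X;\mathbb{R})$, then such a $\Lambda$ exists.
   Context: $\|\cdot\|_1$ on cellular chains of $\widetilde X$ is the $\ell^1$-norm with respect to the basis of cells. $G$ acts on cells of $\widetilde X$ by covering transformations. A cellular real cochain on $\widetilde X$ is bounded on orbits if for every cell $e$ the set $\{\alpha(g\cdot e):g\in G\}$ is bounded. $H^\bullet_{(\infty)}(X;\mathbb{R})$ is (canonically isomorphic to) the cohomology of the complex of real cellular cochains on $\widetilde X$ bounded on orbits; equivalently $H^\bullet(X;\ell^\infty(G,\mathbb{R}))$ with $\ell^\infty(G,\mathbb{R})$ the bounded real functions on $G$ with action $(g f)(h)=f(g^{-1}h)$. *)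

theory Defs
  imports Complex_Main "HOL-Algebra.Group"
begin

text \<open>
  Combinatorial model of the cellular real chain complex of the universal cover
  of a CW complex X, together with the action of G = pi_1(X) by covering
  transformations.  Cells of the universal cover form the set cells; cdim e is the
  dimension of e; bd e f is the integer incidence number of the (oriented,
  lifted) cell f in the boundary of e; act g is the covering transformation of g.
\<close>

definition cw_G_complex ::
  "('g,'b) monoid_scheme \<Rightarrow> 'c set \<Rightarrow> ('c \<Rightarrow> nat) \<Rightarrow> ('c \<Rightarrow> 'c \<Rightarrow> int) \<Rightarrow> ('g \<Rightarrow> 'c \<Rightarrow> 'c) \<Rightarrow> bool"
where
  "cw_G_complex G cells cdim bd act \<longleftrightarrow>
     group G
   \<and> (\<forall>e. finite {f. bd e f \<noteq> 0})
   \<and> (\<forall>e f. bd e f \<noteq> 0 \<longrightarrow> e \<in> cells \<and> f \<in> cells \<and> cdim e = cdim f + 1)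
   \<and> (\<forall>e h. (\<Sum>f\<in>{f. bd e f \<noteq> 0}. bd e f * bd f h) = 0)
   \<and> (\<forall>g\<in>carrier G. \<forall>e\<in>cells. act g e \<in> cells \<and> cdim (act g e) = cdim e)
   \<and> (\<forall>e\<in>cells. act \<one>\<^bsub>G\<^esub> e = e)
   \<and> (\<forall>g\<in>carrier G. \<forall>h\<in>carrier G. \<forall>e\<in>cells. act (g \<otimes>\<^bsub>G\<^esub> h) e = act g (act h e))
   \<and> (\<forall>g\<in>carrier G. \<forall>e\<in>cells. \<forall>f\<in>cells. bd (act g e) (act g f) = bd e f)
   \<and> (\<forall>g\<in>carrier G. \<forall>e\<in>cells. act g e = e \<longrightarrow> g = \<one>\<^bsub>G\<^esub>)"

definition is_chain :: "'c set \<Rightarrow> ('c \<Rightarrow> nat) \<Rightarrow> nat \<Rightarrow> ('c \<Rightarrow> real) \<Rightarrow> bool" where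
  "is_chain cells cdim k c \<longleftrightarrow>
     finite {e. c e \<noteq> 0} \<and> (\<forall>e. c e \<noteq> 0 \<longrightarrow> e \<in> cells \<and> cdim e = k)"

definition chain_bdry :: "('c \<Rightarrow> 'c \<Rightarrow> int) \<Rightarrow> ('c \<Rightarrow> real) \<Rightarrow> ('c \<Rightarrow> real)" where
  "chain_bdry bd c = (\<lambda>f. \<Sum>e\<in>{e. c e \<noteq> 0}. c e * of_int (bd e f))"

definition norm1 :: "('c \<Rightarrow> real) \<Rightarrow> real" where
  "norm1 c = (\<Sum>e\<in>{e. c e \<noteq> 0}. \<bar>c e\<bar>)"

definition cochain_eval :: "('c \<Rightarrow> real) \<Rightarrow> ('c \<Rightarrow> real) \<Rightarrow> real" where
  "cochain_eval \<alpha> c = (\<Sum>e\<in>{e. c e \<noteq> 0}. c e * \<alpha> e)"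

definition coboundary :: "('c \<Rightarrow> 'c \<Rightarrow> int) \<Rightarrow> ('c \<Rightarrow> real) \<Rightarrow> 'c \<Rightarrow> real" where
  "coboundary bd \<beta> e = (\<Sum>f\<in>{f. bd e f \<noteq> 0}. of_int (bd e f) * \<beta> f)"

definition cellular_cocycle ::
  "'c set \<Rightarrow> ('c \<Rightarrow> nat) \<Rightarrow> ('c \<Rightarrow> 'c \<Rightarrow> int) \<Rightarrow> nat \<Rightarrow> ('c \<Rightarrow> real) \<Rightarrow> bool" where
  "cellular_cocycle cells cdim bd k \<alpha> \<longleftrightarrow>
     (\<forall>e\<in>cells. cdim e = k + 1 \<longrightarrow> coboundary bd \<alpha> e = 0)"

definition bounded_on_orbits ::
  "('g,'b) monoid_scheme \<Rightarrow> ('g \<Rightarrow> 'c \<Rightarrow> 'c) \<Rightarrow> 'c set \<Rightarrow> ('c \<Rightarrow> nat) \<Rightarrow> nat \<Rightarrow> ('c \<Rightarrow> real) \<Rightarrow> bool" where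
  "bounded_on_orbits G act cells cdim k \<alpha> \<longleftrightarrow>
     (\<forall>e\<in>cells. cdim e = k \<longrightarrow> (\<exists>B. \<forall>g\<in>carrier G. \<bar>\<alpha> (act g e)\<bar> \<le> B))"

text \<open>[alpha] = 0 in H^k_(infinity)(X;R): alpha is the coboundary of a (k-1)-cochain
  bounded on orbits (for k = 0 there are no (k-1)-cells, so this means alpha = 0 on 0-cells).\<close>
definition coh_infty_zero ::
  "('g,'b) monoid_scheme \<Rightarrow> ('g \<Rightarrow> 'c \<Rightarrow> 'c) \<Rightarrow> 'c set \<Rightarrow> ('c \<Rightarrow> nat) \<Rightarrow> ('c \<Rightarrow> 'c \<Rightarrow> int) \<Rightarrow> nat \<Rightarrow> ('c \<Rightarrow> real) \<Rightarrow> bool" where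
  "coh_infty_zero G act cells cdim bd k \<alpha> \<longleftrightarrow>
     (\<exists>\<beta>. (\<forall>f\<in>cells. cdim f + 1 = k \<longrightarrow> (\<exists>B. \<forall>g\<in>carrier G. \<bar>\<beta> (act g f)\<bar> \<le> B))
        \<and> (\<forall>e\<in>cells. cdim e = k \<longrightarrow> \<alpha> e = coboundary bd \<beta> e))"

definition orbit_of :: "('g,'b) monoid_scheme \<Rightarrow> ('g \<Rightarrow> 'c \<Rightarrow> 'c) \<Rightarrow> 'c \<Rightarrow> 'c set" where
  "orbit_of G act e = (\<lambda>g. act g e) ` carrier G"

text \<open>The (k-1)-skeleton of X = universal cover / G is finite: finitely many G-orbits
  of cells of dimension at most k-1.\<close>
definition finite_skeleton_below ::
  "('g,'b) monoid_scheme \<Rightarrow> ('g \<Rightarrow> 'c \<Rightarrow> 'c) \<Rightarrow> 'c set \<Rightarrow> ('c \<Rightarrow> nat) \<Rightarrow> nat \<Rightarrow> bool" where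
  "finite_skeleton_below G act cells cdim k \<longleftrightarrow>
     finite (orbit_of G act ` {e\<in>cells. cdim e + 1 \<le> k})"

end

theory Submission
  imports Defs "HOL-Library.Indicator_Function"
begin

text \<open>
  Domination says that \<partial>c \<mapsto> \<alpha>(c) is a well-defined linear functional on the boundaries of
  k-chains, bounded by \<Lambda> times the l1-norm. Extending it one cell at a time, by the
  one-dimensional step of the Hahn-Banach argument, and passing to a maximal extension with
  Zorn's lemma gives a cochain \<beta> with |\<beta>| \<le> \<Lambda> everywhere and \<delta>\<beta> = \<alpha> on k-cells; being
  bounded, \<beta> is bounded on orbits, so [\<alpha>] = 0. Applying domination to single cells bounds \<alpha> on
  orbits, since covering transformations preserve the l1-norm of the boundary of a cell.
  Conversely, if there are finitely many orbits of (k-1)-cells, a primitive \<beta> that is bounded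
  on orbits is bounded by some B, and then |\<alpha>(c)| = |\<beta>(\<partial>c)| \<le> B \<parallel>\<partial>c\<parallel>_1.
\<close>

section \<open>Finitely supported chains and cochains\<close>

definition finsupp :: "('c \<Rightarrow> real) \<Rightarrow> bool" where
  "finsupp v \<longleftrightarrow> finite {x. v x \<noteq> 0}"

lemma finsupp_add: "finsupp u \<Longrightarrow> finsupp v \<Longrightarrow> finsupp (\<lambda>x. u x + v x)"
  unfolding finsupp_def by (rule finite_subset[of _ "{x. u x \<noteq> 0} \<union> {x. v x \<noteq> 0}"]) auto

lemma finsupp_scale: "finsupp u \<Longrightarrow> finsupp (\<lambda>x. r * u x)"
  unfolding finsupp_def by (rule finite_subset[of _ "{x. u x \<noteq> 0}"]) auto

lemma support_indicator: "{x. (indicator {e} x :: real) \<noteq> 0} = {e}"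
  by (auto split: split_indicator)

lemma finsupp_indicator: "finsupp (indicator {e} :: 'c \<Rightarrow> real)"
  by (simp add: finsupp_def support_indicator)

lemma finsupp_update: "finsupp u \<Longrightarrow> finsupp (u(e := r))"
  unfolding finsupp_def by (rule finite_subset[of _ "insert e {x. u x \<noteq> 0}"]) auto

lemma is_chain_finsupp: "is_chain cells cdim k c \<Longrightarrow> finsupp c"
  unfolding is_chain_def finsupp_def by blast

lemma is_chain_add:
  "is_chain cells cdim k c \<Longrightarrow> is_chain cells cdim k c' \<Longrightarrow> is_chain cells cdim k (\<lambda>x. c x + c' x)"
  using finsupp_add[of c c'] unfolding is_chain_def finsupp_def
  by (metis (mono_tags, lifting) add.right_neutral)

lemma is_chain_scale: "is_chain cells cdim k c \<Longrightarrow> is_chain cells cdim k (\<lambda>x. r * c x)"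
  using finsupp_scale[of c r] unfolding is_chain_def finsupp_def by auto

lemma is_chain_indicator:
  "e \<in> cells \<Longrightarrow> cdim e = k \<Longrightarrow> is_chain cells cdim k (indicator {e})"
  unfolding is_chain_def by (auto simp: support_indicator indicator_eq_0_iff)

lemma cochain_eval_superset:
  "finite S \<Longrightarrow> {x. c x \<noteq> 0} \<subseteq> S \<Longrightarrow> cochain_eval \<beta> c = (\<Sum>e\<in>S. c e * \<beta> e)"
  unfolding cochain_eval_def by (rule sum.mono_neutral_left) auto

lemma norm1_superset:
  "finite S \<Longrightarrow> {x. c x \<noteq> 0} \<subseteq> S \<Longrightarrow> norm1 c = (\<Sum>e\<in>S. \<bar>c e\<bar>)"
  unfolding norm1_def by (rule sum.mono_neutral_left) auto

lemma cochain_eval_add: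
  assumes "finsupp u" "finsupp v"
  shows "cochain_eval \<beta> (\<lambda>x. u x + v x) = cochain_eval \<beta> u + cochain_eval \<beta> v"
proof -
  let ?S = "{x. u x \<noteq> 0} \<union> {x. v x \<noteq> 0}"
  have "finite ?S" using assms unfolding finsupp_def by blast
  then show ?thesis
    by (subst (1 2 3) cochain_eval_superset[where S = ?S]) (auto simp: sum.distrib distrib_right)
qed

lemma cochain_eval_scale: "cochain_eval \<beta> (\<lambda>x. r * c x) = r * cochain_eval \<beta> c"
  by (cases "r = 0") (simp_all add: cochain_eval_def sum_distrib_left mult.assoc)

lemma cochain_eval_uminus: "cochain_eval \<beta> (\<lambda>x. - c x) = - cochain_eval \<beta> c"
  using cochain_eval_scale[of \<beta> "- 1" c] by simp

lemma cochain_eval_zero [simp]: "cochain_eval \<beta> (\<lambda>_. 0) = 0"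
  by (simp add: cochain_eval_def)

lemma cochain_eval_indicator: "cochain_eval \<beta> (indicator {e}) = \<beta> e"
  by (simp add: cochain_eval_def support_indicator)

lemma cochain_eval_cong:
  "(\<And>x. c x \<noteq> 0 \<Longrightarrow> \<beta> x = \<beta>' x) \<Longrightarrow> cochain_eval \<beta> c = cochain_eval \<beta>' c"
  unfolding cochain_eval_def by (rule sum.cong) auto

lemma abs_cochain_eval_le:
  assumes "\<And>x. v x \<noteq> 0 \<Longrightarrow> \<bar>\<beta> x\<bar> \<le> B"
  shows "\<bar>cochain_eval \<beta> v\<bar> \<le> B * norm1 v"
proof -
  have "\<bar>cochain_eval \<beta> v\<bar> \<le> (\<Sum>x\<in>{x. v x \<noteq> 0}. \<bar>v x\<bar> * \<bar>\<beta> x\<bar>)"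
    unfolding cochain_eval_def using sum_abs by (metis (no_types, lifting) abs_mult sum.cong)
  also have "\<dots> \<le> (\<Sum>x\<in>{x. v x \<noteq> 0}. \<bar>v x\<bar> * B)"
    using assms by (intro sum_mono mult_left_mono) auto
  finally show ?thesis by (simp add: norm1_def sum_distrib_left mult.commute)
qed

lemma norm1_add_le:
  assumes "finsupp u" "finsupp v"
  shows "norm1 (\<lambda>x. u x + v x) \<le> norm1 u + norm1 v"
proof -
  let ?S = "{x. u x \<noteq> 0} \<union> {x. v x \<noteq> 0}"
  have "finite ?S" using assms unfolding finsupp_def by blast
  then show ?thesis
    by (subst (1 2 3) norm1_superset[where S = ?S])
      (auto simp: sum.distrib[symmetric] intro: sum_mono abs_triangle_ineq)
qed

lemma norm1_scale: "norm1 (\<lambda>x. r * c x) = \<bar>r\<bar> * norm1 c"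
  by (cases "r = 0") (simp_all add: norm1_def sum_distrib_left abs_mult)

lemma norm1_zero [simp]: "norm1 (\<lambda>_. 0) = 0"
  by (simp add: norm1_def)

lemma norm1_indicator: "norm1 (indicator {e} :: 'c \<Rightarrow> real) = 1"
  by (simp add: norm1_def support_indicator)

lemma chain_bdry_eq_cochain_eval: "chain_bdry bd c f = cochain_eval (\<lambda>e. of_int (bd e f)) c"
  by (simp add: chain_bdry_def cochain_eval_def)

lemma chain_bdry_add:
  "finsupp u \<Longrightarrow> finsupp v \<Longrightarrow> chain_bdry bd (\<lambda>x. u x + v x) f = chain_bdry bd u f + chain_bdry bd v f"
  by (simp add: chain_bdry_eq_cochain_eval cochain_eval_add)

lemma chain_bdry_scale: "chain_bdry bd (\<lambda>x. r * c x) f = r * chain_bdry bd c f"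
  by (simp add: chain_bdry_eq_cochain_eval cochain_eval_scale)

lemma chain_bdry_uminus: "chain_bdry bd (\<lambda>x. - c x) = (\<lambda>f. - chain_bdry bd c f)"
  by (rule ext) (simp add: chain_bdry_eq_cochain_eval cochain_eval_uminus)

lemma chain_bdry_indicator: "chain_bdry bd (indicator {e}) = (\<lambda>f. of_int (bd e f))"
  by (rule ext) (simp add: chain_bdry_eq_cochain_eval cochain_eval_indicator)

lemma chain_bdry_nonzero:
  "chain_bdry bd c f \<noteq> 0 \<Longrightarrow> \<exists>e. c e \<noteq> 0 \<and> bd e f \<noteq> 0"
proof -
  assume "chain_bdry bd c f \<noteq> 0"
  then obtain e where "e \<in> {e. c e \<noteq> 0}" "c e * of_int (bd e f) \<noteq> 0"
    unfolding chain_bdry_def by (rule sum.not_neutral_contains_not_neutral)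
  then show ?thesis by auto
qed

lemma finsupp_chain_bdry:
  assumes "\<And>e. finite {f. bd e f \<noteq> 0}" and "finsupp c"
  shows "finsupp (chain_bdry bd c)"
proof -
  have "{f. chain_bdry bd c f \<noteq> 0} \<subseteq> (\<Union>e\<in>{x. c x \<noteq> 0}. {f. bd e f \<noteq> 0})"
    by (auto dest: chain_bdry_nonzero)
  moreover have "finite (\<Union>e\<in>{x. c x \<noteq> 0}. {f. bd e f \<noteq> 0})"
    using assms unfolding finsupp_def by simp
  ultimately show ?thesis
    unfolding finsupp_def by (rule finite_subset)
qed

lemma cochain_eval_chain_bdry:
  assumes fin_bd: "\<And>e. finite {f. bd e f \<noteq> 0}" and c: "finsupp c"
  shows "cochain_eval \<beta> (chain_bdry bd c) = cochain_eval (coboundary bd \<beta>) c"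
proof -
  define E where "E = {x. c x \<noteq> 0}"
  define F where "F = (\<Union>e\<in>E. {f. bd e f \<noteq> 0})"
  have fin: "finite E" "finite F" using c fin_bd unfolding E_def F_def finsupp_def by auto
  have "cochain_eval \<beta> (chain_bdry bd c) = (\<Sum>f\<in>F. \<Sum>e\<in>E. c e * of_int (bd e f) * \<beta> f)"
    using fin chain_bdry_nonzero
    by (subst cochain_eval_superset[where S = F]) (auto simp: F_def E_def chain_bdry_def sum_distrib_right)
  also have "\<dots> = (\<Sum>e\<in>E. c e * (\<Sum>f\<in>F. of_int (bd e f) * \<beta> f))"
    by (subst sum.swap) (simp add: sum_distrib_left mult.assoc)
  also have "\<dots> = (\<Sum>e\<in>E. c e * coboundary bd \<beta> e)"
  proof (intro sum.cong refl arg_cong2[where f = "(*)"])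
    fix e assume "e \<in> E"
    then show "(\<Sum>f\<in>F. of_int (bd e f) * \<beta> f) = coboundary bd \<beta> e"
      unfolding coboundary_def using fin by (intro sum.mono_neutral_right) (auto simp: F_def)
  qed
  finally show ?thesis by (simp add: cochain_eval_def E_def)
qed

section \<open>Extending dominated functionals\<close>

text \<open>
  The one-dimensional Hahn-Banach step, over a cone P of representatives: x \<in> P stands for a
  vector v on which the functional \<Phi> is dominated, N x s stands for the sublinear bound at
  v + s d, and t is the value of the extension on the new direction d.
\<close>

lemma dominated_extension_step:
  fixes \<Phi> :: "'x \<Rightarrow> real" and N :: "'x \<Rightarrow> real \<Rightarrow> real" and sc :: "real \<Rightarrow> 'x \<Rightarrow> 'x"
  assumes cross: "\<And>x y. x \<in> P \<Longrightarrow> y \<in> P \<Longrightarrow> \<Phi> x + \<Phi> y \<le> N x (-1) + N y 1"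
    and base: "\<And>x. x \<in> P \<Longrightarrow> \<Phi> x \<le> N x 0"
    and sc_closed: "\<And>r x. r > 0 \<Longrightarrow> x \<in> P \<Longrightarrow> sc r x \<in> P"
    and \<Phi>_sc: "\<And>r x. r > 0 \<Longrightarrow> x \<in> P \<Longrightarrow> \<Phi> (sc r x) = r * \<Phi> x"
    and N_sc: "\<And>r x s. r > 0 \<Longrightarrow> x \<in> P \<Longrightarrow> N (sc r x) (r * s) = r * N x s"
  shows "\<exists>t. \<forall>x\<in>P. \<forall>s. \<Phi> x + s * t \<le> N x s"
proof (cases "P = {}")
  case False
  then obtain y0 where y0: "y0 \<in> P" by blast
  define t where "t = (SUP x\<in>P. \<Phi> x - N x (-1))"
  have bdd: "bdd_above ((\<lambda>x. \<Phi> x - N x (-1)) ` P)"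
    using cross y0 by (intro bdd_aboveI2[where M = "N y0 1 - \<Phi> y0"]) fastforce
  have lower: "\<Phi> x - N x (-1) \<le> t" if "x \<in> P" for x
    unfolding t_def using bdd that by (rule cSUP_upper2) simp
  have upper: "t \<le> N y 1 - \<Phi> y" if "y \<in> P" for y
    unfolding t_def using False cross that by (intro cSUP_least) fastforce+
  have "\<Phi> x + s * t \<le> N x s" if x: "x \<in> P" for x s
  proof -
    consider "s = 0" | "s > 0" | "s < 0" by linarith
    then show ?thesis
    proof cases
      case 1
      then show ?thesis using base x by simp
    next
      case 2
      define r where "r = 1 / s"
      have r: "r > 0" "s * r = 1" using 2 by (simp_all add: r_def)
      have "s * t \<le> s * (N (sc r x) (r * s) - \<Phi> (sc r x))"
        using upper[OF sc_closed[OF r(1) x]] r(2) 2 by (simp add: mult.commute)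
      also have "\<dots> = (s * r) * (N x s - \<Phi> x)"
        using N_sc \<Phi>_sc r(1) x by (simp add: right_diff_distrib mult.assoc)
      finally show ?thesis using r(2) by simp
    next
      case 3
      define r where "r = - 1 / s"
      have r: "r > 0" "(- s) * r = 1" "r * s = - 1" using 3 by (simp_all add: r_def)
      have "\<Phi> x - N x s = (- s) * (r * (\<Phi> x - N x s))"
        using r(2) by (simp only: mult.assoc[symmetric]) simp
      also have "\<dots> = (- s) * (\<Phi> (sc r x) - N (sc r x) (r * s))"
        using N_sc \<Phi>_sc r(1) x by (simp add: right_diff_distrib)
      also have "\<dots> \<le> (- s) * t"
        using lower[OF sc_closed[OF r(1) x]] 3 r(3) by (intro mult_left_mono) simp_all
      finally show ?thesis by simp
    qed
  qed
  then show ?thesis by blast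
qed simp

locale boundary_dominated =
  fixes cells :: "'c set" and cdim :: "'c \<Rightarrow> nat" and bd :: "'c \<Rightarrow> 'c \<Rightarrow> int"
    and k :: nat and \<alpha> :: "'c \<Rightarrow> real" and \<Lambda> :: real
  assumes finite_bd: "\<And>e. finite {f. bd e f \<noteq> 0}"
    and nonneg: "0 \<le> \<Lambda>"
    and dominated: "\<And>c. is_chain cells cdim k c \<Longrightarrow>
      \<bar>cochain_eval \<alpha> c\<bar> \<le> \<Lambda> * norm1 (chain_bdry bd c)"
begin

text \<open>
  R is the graph of a partial cochain \<beta> for which \<partial>c + a \<mapsto> \<alpha>(c) + \<beta>(a), with a supported
  in Domain R, is still dominated by \<Lambda> times the l1-norm.
\<close>

definition admissible :: "('c \<times> real) set \<Rightarrow> bool" where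
  "admissible R \<longleftrightarrow> single_valued R \<and>
     (\<forall>c a \<beta>. is_chain cells cdim k c \<longrightarrow> finsupp a \<longrightarrow> (\<forall>x. a x \<noteq> 0 \<longrightarrow> (x, \<beta> x) \<in> R) \<longrightarrow>
        cochain_eval \<alpha> c + cochain_eval \<beta> a \<le> \<Lambda> * norm1 (\<lambda>x. chain_bdry bd c x + a x))"

lemma admissibleD:
  assumes "admissible R" "is_chain cells cdim k c" "finsupp a" "\<And>x. a x \<noteq> 0 \<Longrightarrow> (x, \<beta> x) \<in> R"
  shows "cochain_eval \<alpha> c + cochain_eval \<beta> a \<le> \<Lambda> * norm1 (\<lambda>x. chain_bdry bd c x + a x)"
  using assms unfolding admissible_def by blast

lemma admissible_Union:
  assumes "C \<in> chains {R. admissible R}"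
  shows "admissible (\<Union>C)"
proof -
  have adm: "\<And>R. R \<in> C \<Longrightarrow> admissible R" and ch: "subset.chain {R. admissible R} C"
    using assms by (auto simp: chains_alt_def subset.chain_def)
  have "single_valued (\<Union>C)"
  proof (rule single_valuedI)
    fix x y z assume "(x, y) \<in> \<Union>C" "(x, z) \<in> \<Union>C"
    then obtain R1 R2 where R: "R1 \<in> C" "R2 \<in> C" "(x, y) \<in> R1" "(x, z) \<in> R2" by blast
    with ch have "R1 \<subseteq> R2 \<or> R2 \<subseteq> R1" by (auto simp: subset.chain_def)
    with R adm show "y = z" unfolding admissible_def single_valued_def by blast
  qed
  moreover have "cochain_eval \<alpha> c + cochain_eval \<beta> a \<le> \<Lambda> * norm1 (\<lambda>x. chain_bdry bd c x + a x)"
    if c: "is_chain cells cdim k c" and a: "finsupp a" and graph: "\<forall>x. a x \<noteq> 0 \<longrightarrow> (x, \<beta> x) \<in> \<Union>C"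
    for c a \<beta>
  proof (cases "C = {}")
    case True
    with graph have "a = (\<lambda>_. 0)" by auto
    with dominated[OF c] show ?thesis by simp
  next
    case False
    have "finite ((\<lambda>x. (x, \<beta> x)) ` {x. a x \<noteq> 0})" using a unfolding finsupp_def by simp
    then obtain R where "R \<in> C" "(\<lambda>x. (x, \<beta> x)) ` {x. a x \<noteq> 0} \<subseteq> R"
      using finite_subset_Union_chain[OF _ _ False ch] graph by blast
    with adm c a show ?thesis by (intro admissibleD) auto
  qed
  ultimately show ?thesis unfolding admissible_def by blast
qed

lemma finsupp_boundary: "is_chain cells cdim k c \<Longrightarrow> finsupp (chain_bdry bd c)"
  by (rule finsupp_chain_bdry[of bd, OF finite_bd is_chain_finsupp])

lemma admissible_cross:
  assumes adm: "admissible R" and \<beta>: "\<And>x. x \<in> Domain R \<Longrightarrow> (x, \<beta> x) \<in> R"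
    and c1: "is_chain cells cdim k c1" and a1: "finsupp a1" "\<forall>x. a1 x \<noteq> 0 \<longrightarrow> x \<in> Domain R"
    and c2: "is_chain cells cdim k c2" and a2: "finsupp a2" "\<forall>x. a2 x \<noteq> 0 \<longrightarrow> x \<in> Domain R"
    and d: "finsupp d"
  shows "cochain_eval \<alpha> c1 + cochain_eval \<beta> a1 + (cochain_eval \<alpha> c2 + cochain_eval \<beta> a2)
    \<le> \<Lambda> * norm1 (\<lambda>x. chain_bdry bd c1 x + a1 x - d x) + \<Lambda> * norm1 (\<lambda>x. chain_bdry bd c2 x + a2 x + d x)"
proof -
  let ?u = "\<lambda>x. chain_bdry bd c1 x + a1 x - d x"
  let ?v = "\<lambda>x. chain_bdry bd c2 x + a2 x + d x"
  have u: "finsupp ?u"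
    using finsupp_add[OF finsupp_add[OF finsupp_boundary[OF c1] a1(1)] finsupp_scale[OF d, of "- 1"]]
    by simp
  have v: "finsupp ?v"
    by (intro finsupp_add finsupp_boundary[OF c2] a2(1) d)
  have sum: "(\<lambda>x. chain_bdry bd (\<lambda>x. c1 x + c2 x) x + (a1 x + a2 x)) = (\<lambda>x. ?u x + ?v x)"
    using chain_bdry_add[OF is_chain_finsupp[OF c1] is_chain_finsupp[OF c2]] by auto
  have graph: "(z, \<beta> z) \<in> R" if "a1 z + a2 z \<noteq> 0" for z
  proof -
    from that have "a1 z \<noteq> 0 \<or> a2 z \<noteq> 0" by auto
    with a1(2) a2(2) \<beta> show ?thesis by blast
  qed
  have "cochain_eval \<alpha> c1 + cochain_eval \<beta> a1 + (cochain_eval \<alpha> c2 + cochain_eval \<beta> a2)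
      = cochain_eval \<alpha> (\<lambda>x. c1 x + c2 x) + cochain_eval \<beta> (\<lambda>x. a1 x + a2 x)"
    using c1 c2 a1 a2 by (simp add: cochain_eval_add is_chain_finsupp)
  also have "\<dots> \<le> \<Lambda> * norm1 (\<lambda>x. ?u x + ?v x)"
    unfolding sum[symmetric] using c1 c2 a1 a2 graph
    by (intro admissibleD[OF adm] is_chain_add finsupp_add) auto
  also have "\<dots> \<le> \<Lambda> * (norm1 ?u + norm1 ?v)"
    by (intro mult_left_mono nonneg norm1_add_le u v)
  finally show ?thesis by (simp add: distrib_left)
qed

lemma admissible_extension_value:
  assumes adm: "admissible R" and \<beta>: "\<And>x. x \<in> Domain R \<Longrightarrow> (x, \<beta> x) \<in> R"
  shows "\<exists>t. \<forall>c a s. is_chain cells cdim k c \<longrightarrow> finsupp a \<longrightarrow> (\<forall>x. a x \<noteq> 0 \<longrightarrow> x \<in> Domain R) \<longrightarrow>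
    cochain_eval \<alpha> c + cochain_eval \<beta> a + s * t
      \<le> \<Lambda> * norm1 (\<lambda>x. chain_bdry bd c x + a x + s * indicator {f} x)"
proof -
  define P where "P = {(c, a). is_chain cells cdim k c \<and> finsupp a \<and> (\<forall>x. a x \<noteq> 0 \<longrightarrow> x \<in> Domain R)}"
  define \<Phi> where "\<Phi> = (\<lambda>(c, a). cochain_eval \<alpha> c + cochain_eval \<beta> a)"
  define N where "N = (\<lambda>(c, a) s. \<Lambda> * norm1 (\<lambda>x. chain_bdry bd c x + a x + s * indicator {f} x))"
  define sc :: "real \<Rightarrow> ('c \<Rightarrow> real) \<times> ('c \<Rightarrow> real) \<Rightarrow> _"
    where "sc = (\<lambda>r (c, a). (\<lambda>x. r * c x, \<lambda>x. r * a x))"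
  have "\<exists>t. \<forall>x\<in>P. \<forall>s. \<Phi> x + s * t \<le> N x s"
  proof (rule dominated_extension_step)
    fix x y assume "x \<in> P" "y \<in> P"
    then obtain c1 a1 c2 a2 where "x = (c1, a1)" "y = (c2, a2)"
      and "is_chain cells cdim k c1" "finsupp a1" "\<forall>x. a1 x \<noteq> 0 \<longrightarrow> x \<in> Domain R"
      and "is_chain cells cdim k c2" "finsupp a2" "\<forall>x. a2 x \<noteq> 0 \<longrightarrow> x \<in> Domain R"
      unfolding P_def by blast
    with admissible_cross[OF adm \<beta> _ _ _ _ _ _ finsupp_indicator[of f]]
    show "\<Phi> x + \<Phi> y \<le> N x (- 1) + N y 1"
      by (simp add: \<Phi>_def N_def)
  next
    fix x assume "x \<in> P"
    then show "\<Phi> x \<le> N x 0"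
      unfolding P_def \<Phi>_def N_def using \<beta> by (auto intro!: admissibleD[OF adm])
  next
    fix r :: real and x assume "r > 0" "x \<in> P"
    then show "sc r x \<in> P"
      unfolding P_def sc_def by (auto intro: is_chain_scale finsupp_scale)
    show "\<Phi> (sc r x) = r * \<Phi> x"
      by (simp add: \<Phi>_def sc_def cochain_eval_scale distrib_left split: prod.splits)
    fix s
    have "(\<lambda>y. chain_bdry bd (\<lambda>x. r * c x) y + r * a y + r * s * indicator {f} y)
        = (\<lambda>y. r * (chain_bdry bd c y + a y + s * indicator {f} y))" for c a
      by (simp add: chain_bdry_scale algebra_simps)
    with \<open>r > 0\<close> show "N (sc r x) (r * s) = r * N x s"
      by (simp add: N_def sc_def norm1_scale split: prod.splits)
  qed
  then show ?thesis unfolding P_def \<Phi>_def N_def by fastforce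
qed

lemma admissible_insert:
  assumes adm: "admissible R" and f: "f \<notin> Domain R"
  shows "\<exists>t. admissible (insert (f, t) R)"
proof -
  define \<beta> where "\<beta> x = (SOME t. (x, t) \<in> R)" for x
  have \<beta>: "(x, \<beta> x) \<in> R" if "x \<in> Domain R" for x
    unfolding \<beta>_def using that by (auto intro: someI)
  obtain t where t: "\<And>c a s. is_chain cells cdim k c \<Longrightarrow> finsupp a \<Longrightarrow> (\<forall>x. a x \<noteq> 0 \<longrightarrow> x \<in> Domain R) \<Longrightarrow>
      cochain_eval \<alpha> c + cochain_eval \<beta> a + s * t
        \<le> \<Lambda> * norm1 (\<lambda>x. chain_bdry bd c x + a x + s * indicator {f} x)"
    using admissible_extension_value[OF adm \<beta>] by blast
  have "cochain_eval \<alpha> c + cochain_eval b a \<le> \<Lambda> * norm1 (\<lambda>x. chain_bdry bd c x + a x)"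
    if c: "is_chain cells cdim k c" and a: "finsupp a"
      and graph: "\<forall>x. a x \<noteq> 0 \<longrightarrow> (x, b x) \<in> insert (f, t) R" for c a b
  proof -
    define a' where "a' = a(f := 0)"
    have a'_R: "(x, b x) \<in> R" if "a' x \<noteq> 0" for x
      using graph that by (auto simp: a'_def split: if_splits)
    have split: "a = (\<lambda>x. a' x + a f * indicator {f} x)"
      by (auto simp: a'_def split: split_indicator)
    have a': "finsupp a'" using a unfolding a'_def by (rule finsupp_update)
    have supp: "\<forall>x. a' x \<noteq> 0 \<longrightarrow> x \<in> Domain R" using a'_R by blast
    have "a f * b f = a f * t"
      using graph f by (cases "a f = 0") auto
    moreover have "cochain_eval b a' = cochain_eval \<beta> a'"
      using a'_R adm \<beta> unfolding admissible_def single_valued_def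
      by (intro cochain_eval_cong) blast
    moreover have "cochain_eval b a = cochain_eval b a' + a f * b f"
      by (subst split) (simp add: cochain_eval_add a' finsupp_scale finsupp_indicator
          cochain_eval_scale cochain_eval_indicator)
    ultimately have "cochain_eval \<alpha> c + cochain_eval b a = cochain_eval \<alpha> c + cochain_eval \<beta> a' + a f * t"
      by simp
    also have "\<dots> \<le> \<Lambda> * norm1 (\<lambda>x. chain_bdry bd c x + a' x + a f * indicator {f} x)"
      by (rule t[OF c a' supp])
    also have "\<dots> = \<Lambda> * norm1 (\<lambda>x. chain_bdry bd c x + a x)"
      by (subst (2) split) (simp add: add.assoc)
    finally show ?thesis .
  qed
  moreover have "single_valued (insert (f, t) R)"
    using adm f unfolding admissible_def single_valued_def by auto
  ultimately show ?thesis unfolding admissible_def by blast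
qed

lemma total_admissible_primitive:
  assumes adm: "admissible M" and graph: "\<And>x. (x, \<beta> x) \<in> M"
  shows "(\<forall>x. \<bar>\<beta> x\<bar> \<le> \<Lambda>) \<and> (\<forall>e\<in>cells. cdim e = k \<longrightarrow> \<alpha> e = coboundary bd \<beta> e)"
proof -
  have dom: "cochain_eval \<alpha> c + cochain_eval \<beta> a \<le> \<Lambda> * norm1 (\<lambda>x. chain_bdry bd c x + a x)"
    if "is_chain cells cdim k c" "finsupp a" for c a
    using admissibleD[OF adm that] graph by blast
  have zero: "is_chain cells cdim k (\<lambda>_. 0)" "chain_bdry bd (\<lambda>_. 0) = (\<lambda>_. 0)"
    by (auto simp: is_chain_def chain_bdry_def)
  have "r * \<beta> x \<le> \<Lambda> * \<bar>r\<bar>" for x r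
    using dom[OF zero(1) finsupp_scale[OF finsupp_indicator[of x], of r]]
    by (simp add: zero(2) cochain_eval_scale cochain_eval_indicator norm1_scale norm1_indicator)
  from this[of 1] this[of "- 1"] have "\<bar>\<beta> x\<bar> \<le> \<Lambda>" for x by (simp add: abs_le_iff)
  moreover have le: "cochain_eval \<alpha> c \<le> cochain_eval \<beta> (chain_bdry bd c)"
    if c: "is_chain cells cdim k c" for c
    using dom[OF c finsupp_scale[OF finsupp_boundary[OF c]], of "- 1"]
    by (simp add: cochain_eval_uminus)
  have "cochain_eval \<alpha> c = cochain_eval \<beta> (chain_bdry bd c)"
    if c: "is_chain cells cdim k c" for c
  proof -
    have "- cochain_eval \<alpha> c \<le> - cochain_eval \<beta> (chain_bdry bd c)"
      using le[of "\<lambda>x. - c x"] is_chain_scale[OF c, of "- 1"]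
      by (simp add: cochain_eval_uminus chain_bdry_uminus)
    with le[OF c] show ?thesis by linarith
  qed
  then have "\<alpha> e = coboundary bd \<beta> e" if "e \<in> cells" "cdim e = k" for e
    using is_chain_indicator[of e cells cdim k] that
    by (metis cochain_eval_indicator cochain_eval_chain_bdry[of bd, OF finite_bd finsupp_indicator])
  ultimately show ?thesis by blast
qed

lemma bounded_primitive_exists:
  "\<exists>\<beta>. (\<forall>x. \<bar>\<beta> x\<bar> \<le> \<Lambda>) \<and> (\<forall>e\<in>cells. cdim e = k \<longrightarrow> \<alpha> e = coboundary bd \<beta> e)"
proof -
  obtain M where adm: "admissible M" and max: "\<And>X. admissible X \<Longrightarrow> M \<subseteq> X \<Longrightarrow> X = M"
    using Zorn_Lemma[of "{R. admissible R}"] admissible_Union by blast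
  have total: "x \<in> Domain M" for x
  proof (rule ccontr)
    assume "x \<notin> Domain M"
    with admissible_insert[OF adm] obtain t where "admissible (insert (x, t) M)" by blast
    with max have "insert (x, t) M = M" by blast
    with \<open>x \<notin> Domain M\<close> show False by blast
  qed
  define \<beta> where "\<beta> x = (SOME t. (x, t) \<in> M)" for x
  have "(x, \<beta> x) \<in> M" for x
    unfolding \<beta>_def using total[of x] by (auto intro: someI)
  with total_admissible_primitive[OF adm] show ?thesis by blast
qed

end

section \<open>Invariance under covering transformations\<close>

lemma act_inv_cancel:
  assumes cx: "cw_G_complex G cells cdim bd act" and g: "g \<in> carrier G" and x: "x \<in> cells"
  shows "act (inv\<^bsub>G\<^esub> g) (act g x) = x"
proof -
  have grp: "group G" and one: "\<forall>e\<in>cells. act \<one>\<^bsub>G\<^esub> e = e"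
    and mult: "\<forall>g\<in>carrier G. \<forall>h\<in>carrier G. \<forall>e\<in>cells. act (g \<otimes>\<^bsub>G\<^esub> h) e = act g (act h e)"
    using cx unfolding cw_G_complex_def by blast+
  have "act (inv\<^bsub>G\<^esub> g) (act g x) = act (inv\<^bsub>G\<^esub> g \<otimes>\<^bsub>G\<^esub> g) x"
    using mult g x group.inv_closed[OF grp g] by simp
  also have "\<dots> = x" using one x group.l_inv[OF grp g] by simp
  finally show ?thesis .
qed

lemma boundary_support_act:
  assumes cx: "cw_G_complex G cells cdim bd act" and g: "g \<in> carrier G" and e: "e \<in> cells"
  shows "{f. bd (act g e) f \<noteq> 0} = act g ` {f. bd e f \<noteq> 0}"
proof -
  have grp: "group G"
    and inc: "\<And>e f. bd e f \<noteq> 0 \<Longrightarrow> e \<in> cells \<and> f \<in> cells \<and> cdim e = cdim f + 1"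
    and closed: "\<forall>g\<in>carrier G. \<forall>e\<in>cells. act g e \<in> cells \<and> cdim (act g e) = cdim e"
    and inv: "\<forall>g\<in>carrier G. \<forall>e\<in>cells. \<forall>f\<in>cells. bd (act g e) (act g f) = bd e f"
    using cx unfolding cw_G_complex_def by blast+
  show ?thesis
  proof (intro equalityI subsetI)
    fix y assume "y \<in> {f. bd (act g e) f \<noteq> 0}"
    then have y: "y \<in> cells" "bd (act g e) y \<noteq> 0" using inc by auto
    define f where "f = act (inv\<^bsub>G\<^esub> g) y"
    have g': "inv\<^bsub>G\<^esub> g \<in> carrier G" using grp g by (rule group.inv_closed)
    have "act g f = y"
      using act_inv_cancel[OF cx g' y(1)] group.inv_inv[OF grp g] by (simp add: f_def)
    moreover have "f \<in> cells" using closed g' y(1) by (simp add: f_def)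
    ultimately have "bd e f \<noteq> 0" using inv g e y(2) by metis
    with \<open>act g f = y\<close> show "y \<in> act g ` {f. bd e f \<noteq> 0}" by blast
  next
    fix y assume "y \<in> act g ` {f. bd e f \<noteq> 0}"
    then obtain f where "bd e f \<noteq> 0" "y = act g f" by blast
    with inc inv g e show "y \<in> {f. bd (act g e) f \<noteq> 0}" by auto
  qed
qed

lemma norm1_boundary_act:
  assumes cx: "cw_G_complex G cells cdim bd act" and g: "g \<in> carrier G" and e: "e \<in> cells"
  shows "norm1 (\<lambda>f. of_int (bd (act g e) f)) = norm1 (\<lambda>f. of_int (bd e f))"
proof -
  have inc: "\<And>e f. bd e f \<noteq> 0 \<Longrightarrow> e \<in> cells \<and> f \<in> cells \<and> cdim e = cdim f + 1"
    and inv: "\<forall>g\<in>carrier G. \<forall>e\<in>cells. \<forall>f\<in>cells. bd (act g e) (act g f) = bd e f"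
    using cx unfolding cw_G_complex_def by blast+
  have inj: "inj_on (act g) {f. bd e f \<noteq> 0}"
    by (rule inj_on_inverseI[where g = "act (inv\<^bsub>G\<^esub> g)"]) (use act_inv_cancel[OF cx g] inc in blast)
  have "norm1 (\<lambda>f. of_int (bd (act g e) f)) = (\<Sum>f\<in>act g ` {f. bd e f \<noteq> 0}. \<bar>of_int (bd (act g e) f)\<bar>)"
    by (simp add: norm1_def boundary_support_act[OF cx g e])
  also have "\<dots> = (\<Sum>f\<in>{f. bd e f \<noteq> 0}. \<bar>of_int (bd e f)\<bar>)"
    by (simp add: sum.reindex[OF inj]) (use inv g e inc in \<open>intro sum.cong, auto\<close>)
  finally show ?thesis by (simp add: norm1_def)
qed

lemma bounded_on_orbits_if_boundary_dominated:
  assumes cx: "cw_G_complex G cells cdim bd act"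
    and dom: "\<And>c. is_chain cells cdim k c \<Longrightarrow> \<bar>cochain_eval \<alpha> c\<bar> \<le> \<Lambda> * norm1 (chain_bdry bd c)"
  shows "bounded_on_orbits G act cells cdim k \<alpha>"
  unfolding bounded_on_orbits_def
proof (intro ballI impI)
  fix e assume e: "e \<in> cells" "cdim e = k"
  have closed: "\<forall>g\<in>carrier G. \<forall>e\<in>cells. act g e \<in> cells \<and> cdim (act g e) = cdim e"
    using cx unfolding cw_G_complex_def by blast
  have "\<bar>\<alpha> (act g e)\<bar> \<le> \<Lambda> * norm1 (\<lambda>f. of_int (bd e f))" if g: "g \<in> carrier G" for g
    using dom[OF is_chain_indicator[of "act g e" cells cdim k]] closed g e
    by (simp add: cochain_eval_indicator chain_bdry_indicator norm1_boundary_act[OF cx g e(1)])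
  then show "\<exists>B. \<forall>g\<in>carrier G. \<bar>\<alpha> (act g e)\<bar> \<le> B" by blast
qed

lemma bounded_on_finitely_many_orbits:
  fixes \<beta> :: "'c \<Rightarrow> real"
  assumes cx: "cw_G_complex G cells cdim bd act" and S: "S \<subseteq> cells"
    and fin: "finite (orbit_of G act ` S)"
    and bdd: "\<forall>e\<in>S. \<exists>B. \<forall>g\<in>carrier G. \<bar>\<beta> (act g e)\<bar> \<le> B"
  shows "\<exists>B. \<forall>e\<in>S. \<bar>\<beta> e\<bar> \<le> B"
proof -
  have one: "\<one>\<^bsub>G\<^esub> \<in> carrier G" "\<forall>e\<in>cells. act \<one>\<^bsub>G\<^esub> e = e"
    using cx unfolding cw_G_complex_def by (auto intro: group.is_monoid)
  have cover: "S \<subseteq> \<Union>(orbit_of G act ` S)"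
    unfolding orbit_of_def using one S by force
  have "bdd_above ((\<lambda>x. \<bar>\<beta> x\<bar>) ` Orb)" if "Orb \<in> orbit_of G act ` S" for Orb
  proof -
    from that obtain e B where "e \<in> S" "Orb = (\<lambda>g. act g e) ` carrier G"
      and "\<forall>g\<in>carrier G. \<bar>\<beta> (act g e)\<bar> \<le> B"
      using bdd unfolding orbit_of_def by blast
    then show ?thesis by (auto intro: bdd_aboveI2)
  qed
  with fin have "bdd_above ((\<lambda>x. \<bar>\<beta> x\<bar>) ` \<Union>(orbit_of G act ` S))"
    by (simp only: image_Union bdd_above_UN) (intro ballI)
  then obtain B where "\<forall>x\<in>\<Union>(orbit_of G act ` S). \<bar>\<beta> x\<bar> \<le> B"
    by (auto simp: bdd_above_def)
  with cover show ?thesis by blast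
qed

lemma boundary_dominated_if_bounded_primitive:
  assumes fin_bd: "\<And>e. finite {f. bd e f \<noteq> 0}"
    and inc: "\<And>e f. bd e f \<noteq> 0 \<Longrightarrow> f \<in> cells \<and> cdim e = cdim f + 1"
    and bound: "\<forall>f\<in>cells. cdim f + 1 = k \<longrightarrow> \<bar>\<beta> f\<bar> \<le> B"
    and prim: "\<forall>e\<in>cells. cdim e = k \<longrightarrow> \<alpha> e = coboundary bd \<beta> e"
    and c: "is_chain cells cdim k c"
  shows "\<bar>cochain_eval \<alpha> c\<bar> \<le> B * norm1 (chain_bdry bd c)"
proof -
  have "cochain_eval \<alpha> c = cochain_eval (coboundary bd \<beta>) c"
    using c prim unfolding is_chain_def by (intro cochain_eval_cong) auto
  also have "\<dots> = cochain_eval \<beta> (chain_bdry bd c)"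
    using cochain_eval_chain_bdry[OF fin_bd is_chain_finsupp[OF c]] by simp
  finally have "cochain_eval \<alpha> c = cochain_eval \<beta> (chain_bdry bd c)" .
  moreover have "\<bar>\<beta> f\<bar> \<le> B" if "chain_bdry bd c f \<noteq> 0" for f
    using chain_bdry_nonzero[OF that] c inc bound unfolding is_chain_def by metis
  ultimately show ?thesis by (simp add: abs_cochain_eval_le)
qed

lemma coh_infty_zero_bounded_primitive:
  assumes cx: "cw_G_complex G cells cdim bd act"
    and fin: "finite_skeleton_below G act cells cdim k"
    and coh: "coh_infty_zero G act cells cdim bd k \<alpha>"
  obtains \<beta> B where "0 \<le> B" "\<forall>f\<in>cells. cdim f + 1 = k \<longrightarrow> \<bar>\<beta> f\<bar> \<le> B"
    "\<forall>e\<in>cells. cdim e = k \<longrightarrow> \<alpha> e = coboundary bd \<beta> e"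
proof -
  have fin': "finite (orbit_of G act ` {f\<in>cells. cdim f + 1 = k})"
    using fin unfolding finite_skeleton_below_def by (rule finite_subset[rotated]) auto
  obtain \<beta> where orb: "\<forall>f\<in>cells. cdim f + 1 = k \<longrightarrow> (\<exists>B. \<forall>g\<in>carrier G. \<bar>\<beta> (act g f)\<bar> \<le> B)"
    and prim: "\<forall>e\<in>cells. cdim e = k \<longrightarrow> \<alpha> e = coboundary bd \<beta> e"
    using coh unfolding coh_infty_zero_def by blast
  obtain B where "\<forall>f\<in>{f\<in>cells. cdim f + 1 = k}. \<bar>\<beta> f\<bar> \<le> B"
    using bounded_on_finitely_many_orbits[OF cx _ fin', of \<beta>] orb by auto
  then have "\<forall>f\<in>cells. cdim f + 1 = k \<longrightarrow> \<bar>\<beta> f\<bar> \<le> max B 0" by force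
  with prim show ?thesis by (intro that[where \<beta> = \<beta> and B = "max B 0"]) simp_all
qed

theorem mainTheorem5:
  fixes G :: "('g,'b) monoid_scheme" and cells :: "'c set" and cdim :: "'c \<Rightarrow> nat"
    and bd :: "'c \<Rightarrow> 'c \<Rightarrow> int" and act :: "'g \<Rightarrow> 'c \<Rightarrow> 'c"
    and k :: nat and \<alpha> :: "'c \<Rightarrow> real"
  assumes cx: "cw_G_complex G cells cdim bd act"
    and coc: "cellular_cocycle cells cdim bd k \<alpha>"
  shows "((\<exists>\<Lambda>\<ge>0. \<forall>c. is_chain cells cdim k c \<longrightarrow>
              \<bar>cochain_eval \<alpha> c\<bar> \<le> \<Lambda> * norm1 (chain_bdry bd c))
           \<longrightarrow> bounded_on_orbits G act cells cdim k \<alpha> \<and> coh_infty_zero G act cells cdim bd k \<alpha>)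
       \<and> ((finite_skeleton_below G act cells cdim k \<and> bounded_on_orbits G act cells cdim k \<alpha>
            \<and> coh_infty_zero G act cells cdim bd k \<alpha>)
           \<longrightarrow> (\<exists>\<Lambda>\<ge>0. \<forall>c. is_chain cells cdim k c \<longrightarrow>
              \<bar>cochain_eval \<alpha> c\<bar> \<le> \<Lambda> * norm1 (chain_bdry bd c)))"
proof (intro conjI impI)
  have fin_bd: "\<And>e. finite {f. bd e f \<noteq> 0}"
    and inc: "\<And>e f. bd e f \<noteq> 0 \<Longrightarrow> f \<in> cells \<and> cdim e = cdim f + 1"
    using cx unfolding cw_G_complex_def by blast+
  {
    assume "\<exists>\<Lambda>\<ge>0. \<forall>c. is_chain cells cdim k c \<longrightarrow> \<bar>cochain_eval \<alpha> c\<bar> \<le> \<Lambda> * norm1 (chain_bdry bd c)"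
    then obtain \<Lambda> where "boundary_dominated cells cdim bd k \<alpha> \<Lambda>"
      using fin_bd unfolding boundary_dominated_def by blast
    then interpret boundary_dominated cells cdim bd k \<alpha> \<Lambda> .
    obtain \<beta> where "\<forall>x. \<bar>\<beta> x\<bar> \<le> \<Lambda>" "\<forall>e\<in>cells. cdim e = k \<longrightarrow> \<alpha> e = coboundary bd \<beta> e"
      using bounded_primitive_exists by blast
    then show "coh_infty_zero G act cells cdim bd k \<alpha>"
      unfolding coh_infty_zero_def by blast
    show "bounded_on_orbits G act cells cdim k \<alpha>"
      using bounded_on_orbits_if_boundary_dominated[OF cx dominated] .
  }
  assume "finite_skeleton_below G act cells cdim k \<and> bounded_on_orbits G act cells cdim k \<alpha>
    \<and> coh_infty_zero G act cells cdim bd k \<alpha>"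
  then have "finite_skeleton_below G act cells cdim k" "coh_infty_zero G act cells cdim bd k \<alpha>"
    by simp_all
  then obtain \<beta> B where "0 \<le> B" and bound: "\<forall>f\<in>cells. cdim f + 1 = k \<longrightarrow> \<bar>\<beta> f\<bar> \<le> B"
    and prim: "\<forall>e\<in>cells. cdim e = k \<longrightarrow> \<alpha> e = coboundary bd \<beta> e"
    by (rule coh_infty_zero_bounded_primitive[OF cx])
  with boundary_dominated_if_bounded_primitive[OF fin_bd inc bound prim]
  show "\<exists>\<Lambda>\<ge>0. \<forall>c. is_chain cells cdim k c \<longrightarrow> \<bar>cochain_eval \<alpha> c\<bar> \<le> \<Lambda> * norm1 (chain_bdry bd c)"
    by blast
qed

end
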